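(* Consider an RBM with observed variables $X\in\{-1,1\}^n$ as in the context, with parameter $s$. Fix an observed variable $u$ and subsets $I,S\subseteq[n]$ such that $\{u\},I,S$ are pairwise disjoint, $I$ is nonempty, and $I$ is a subset of the MRF neighborhood of $u$. Then there exists a subset $I'\subseteq I$ with $|I'|\le 2^s$ such that \[\nu_{u,I'|S}\ge\frac{1}{(4|I|)^{2^s}}\left(\frac{1}{|I|}\right)^{2^s(2^s+1)}\nu_{u,I|S}.\]
   Context: RBM: $\mathbb{P}(X=x,Y=y)\propto\exp(x^TJy+h^Tx+g^Ty)$ over observed $X\in\{-1,1\}^n$, latent $Y\in\{-1,1\}^m$. The marginal of $X$ is $\propto\exp(f(x))$, $f(x)=\sum_j\rho(J_j\cdot x+g_j)+h^Tx$, $\rho(t)=\log(e^t+e^{-t})$, $J_j$ the $j$-th column of $J$; $f=\sum_{T\subseteq[n]}\hat f(T)\chi_T$, $\chi_T(x)=\prod_{i\in T}x_i$. MRF neighborhood of $u$: all $i\ne u$ with $\hat f(T)\ne0$ for some $T\ni u,i$. $s$: maximum over $u$ of the number of latent $j$ with $J_{i,j}\ne0$ for some $i$ in the MRF neighborhood of $u$. For disjoint $\{u\},I,S$: $\nu_{u,I|S}:=\mathbb{E}_{R,G}\big[\mathbb{E}_{X_S}|\mathbb{P}(X_u=R,X_I=G|X_S)-\mathbb{P}(X_u=R|X_S)\mathbb{P}(X_I=G|X_S)|\big]$, with $R$ uniform on $\{-1,1\}$, $G$ uniform on $\{-1,1\}^{|I|}$, independent, and $X_S$ and all probabilities under the marginal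 of the RBM. *)

theory Defs
  imports Complex_Main "HOL-Library.FuncSet"
begin

text \<open>Observed variables are indexed by 0..<n, latent ones by 0..<m.
  A configuration of the observed variables is an extensional function
  on {0..<n} with values in {-1,1}.\<close>

definition rho :: "real \<Rightarrow> real" where
  "rho t = ln (exp t + exp (- t))"

definition cube :: "nat set \<Rightarrow> (nat \<Rightarrow> real) set" where
  "cube A = A \<rightarrow>\<^sub>E {-1, 1}"

text \<open>The function f with marginal of X proportional to exp f.\<close>
definition rbm_f :: "nat \<Rightarrow> nat \<Rightarrow> (nat \<Rightarrow> nat \<Rightarrow> real) \<Rightarrow> (nat \<Rightarrow> real) \<Rightarrow> (nat \<Rightarrow> real)
    \<Rightarrow> (nat \<Rightarrow> real) \<Rightarrow> real" where
  "rbm_f n m J h g x = (\<Sum>j<m. rho ((\<Sum>i<n. J i j * x i) + g j)) + (\<Sum>i<n. h i * x i)"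

definition chi :: "nat set \<Rightarrow> (nat \<Rightarrow> real) \<Rightarrow> real" where
  "chi T x = (\<Prod>i\<in>T. x i)"

definition fourier_coeff :: "nat \<Rightarrow> ((nat \<Rightarrow> real) \<Rightarrow> real) \<Rightarrow> nat set \<Rightarrow> real" where
  "fourier_coeff n f T = (\<Sum>x\<in>cube {0..<n}. f x * chi T x) / 2 ^ n"

definition mrf_nbhd :: "nat \<Rightarrow> nat \<Rightarrow> (nat \<Rightarrow> nat \<Rightarrow> real) \<Rightarrow> (nat \<Rightarrow> real) \<Rightarrow> (nat \<Rightarrow> real)
    \<Rightarrow> nat \<Rightarrow> nat set" where
  "mrf_nbhd n m J h g u = {i \<in> {0..<n}. i \<noteq> u \<and>
     (\<exists>T \<subseteq> {0..<n}. u \<in> T \<and> i \<in> T \<and> fourier_coeff n (rbm_f n m J h g) T \<noteq> 0)}"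

definition rbm_s :: "nat \<Rightarrow> nat \<Rightarrow> (nat \<Rightarrow> nat \<Rightarrow> real) \<Rightarrow> (nat \<Rightarrow> real) \<Rightarrow> (nat \<Rightarrow> real) \<Rightarrow> nat" where
  "rbm_s n m J h g = Max ((\<lambda>u. card {j \<in> {0..<m}. \<exists>i \<in> mrf_nbhd n m J h g u. J i j \<noteq> 0}) ` {0..<n})"

definition rbm_prob :: "nat \<Rightarrow> nat \<Rightarrow> (nat \<Rightarrow> nat \<Rightarrow> real) \<Rightarrow> (nat \<Rightarrow> real) \<Rightarrow> (nat \<Rightarrow> real)
    \<Rightarrow> ((nat \<Rightarrow> real) \<Rightarrow> bool) \<Rightarrow> real" where
  "rbm_prob n m J h g E =
     (\<Sum>x\<in>{x \<in> cube {0..<n}. E x}. exp (rbm_f n m J h g x)) /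
     (\<Sum>x\<in>cube {0..<n}. exp (rbm_f n m J h g x))"

definition agree :: "nat set \<Rightarrow> (nat \<Rightarrow> real) \<Rightarrow> (nat \<Rightarrow> real) \<Rightarrow> bool" where
  "agree A a x \<longleftrightarrow> (\<forall>i\<in>A. x i = a i)"

definition rbm_cond :: "nat \<Rightarrow> nat \<Rightarrow> (nat \<Rightarrow> nat \<Rightarrow> real) \<Rightarrow> (nat \<Rightarrow> real) \<Rightarrow> (nat \<Rightarrow> real)
    \<Rightarrow> ((nat \<Rightarrow> real) \<Rightarrow> bool) \<Rightarrow> nat set \<Rightarrow> (nat \<Rightarrow> real) \<Rightarrow> real" where
  "rbm_cond n m J h g E S xs =
     rbm_prob n m J h g (\<lambda>x. E x \<and> agree S xs x) / rbm_prob n m J h g (agree S xs)"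

text \<open>nu_{u,I|S}: R uniform on {-1,1}, G uniform on {-1,1}^I, X_S from the marginal.\<close>
definition rbm_nu :: "nat \<Rightarrow> nat \<Rightarrow> (nat \<Rightarrow> nat \<Rightarrow> real) \<Rightarrow> (nat \<Rightarrow> real) \<Rightarrow> (nat \<Rightarrow> real)
    \<Rightarrow> nat \<Rightarrow> nat set \<Rightarrow> nat set \<Rightarrow> real" where
  "rbm_nu n m J h g u I S =
     (\<Sum>r\<in>{-1, 1::real}. \<Sum>G\<in>cube I. \<Sum>xs\<in>cube S.
        (1 / 2) * (1 / 2 ^ card I) * rbm_prob n m J h g (agree S xs) *
        \<bar>rbm_cond n m J h g (\<lambda>x. x u = r \<and> agree I G x) S xs
          - rbm_cond n m J h g (\<lambda>x. x u = r) S xs * rbm_cond n m J h g (agree I G) S xs\<bar>)"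

end

theory Submission
  imports Defs
begin

(* Summing out the latent units connected to I (at most s of them) writes
   P(X_u = r, X_T = G | X_S) - P(X_u = r | X_S) P(X_T = G | X_S), simultaneously for all T within I,
   as a signed mixture over the at most 2^s latent configurations y of product measures on
   {-1,1}^T with means tanh (h_i + sum_j J_ij y_j).  For a signed mixture of k product measures,
   every moment E[chi_T] with T within I is at most (|I| + 1)^k times the total size of the moments
   of order at most k, because adding an index to T can be traded for removing a component.
   Moments are Fourier coefficients, so the mean deviation over G in {-1,1}^I is at most
   (|I| + 1)^k 2^k times the sum of the mean deviations over the at most |I|^(k+1) subsets of size
   at most k; the largest summand gives I'. *)

lemma cube_PiE: "cube T = PiE T (\<lambda>_. {-1, 1})"
  by (simp add: cube_def)

lemma finite_cube: "finite T \<Longrightarrow> finite (cube T)"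
  by (simp add: cube_def finite_PiE)

lemma card_cube: "finite T \<Longrightarrow> card (cube T) = 2 ^ card T"
  by (simp add: cube_def card_PiE numeral_2_eq_2)

lemma cube_iff:
  "x \<in> cube A \<longleftrightarrow> (\<forall>i\<in>A. x i = -1 \<or> x i = 1) \<and> (\<forall>i. i \<notin> A \<longrightarrow> x i = undefined)"
  by (auto simp: cube_def PiE_iff extensional_def)

lemma cube_values: "G \<in> cube T \<Longrightarrow> i \<in> T \<Longrightarrow> G i = -1 \<or> G i = 1"
  by (simp add: cube_iff)

lemma abs_chi_cube: "G \<in> cube T \<Longrightarrow> X \<subseteq> T \<Longrightarrow> \<bar>chi X G\<bar> = 1"
  unfolding chi_def abs_prod by (rule prod.neutral) (auto dest: cube_values)

(* mixture Y c mu T G is the probability of X_T = G under the signed mixture, with weights c, of the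
   product measures on {-1,1}^T with means mu y i; moment Y c mu T is the expectation of chi_T. *)
definition mixture ::
    "'y set \<Rightarrow> ('y \<Rightarrow> real) \<Rightarrow> ('y \<Rightarrow> nat \<Rightarrow> real) \<Rightarrow> nat set \<Rightarrow> (nat \<Rightarrow> real) \<Rightarrow> real"
  where "mixture Y c mu T G = (\<Sum>y\<in>Y. c y * (\<Prod>i\<in>T. (1 + G i * mu y i) / 2))"

definition moment ::
    "'y set \<Rightarrow> ('y \<Rightarrow> real) \<Rightarrow> ('y \<Rightarrow> nat \<Rightarrow> real) \<Rightarrow> nat set \<Rightarrow> real"
  where "moment Y c mu T = (\<Sum>y\<in>Y. c y * (\<Prod>i\<in>T. mu y i))"

definition cube_mean_abs :: "((nat \<Rightarrow> real) \<Rightarrow> real) \<Rightarrow> nat set \<Rightarrow> real"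
  where "cube_mean_abs q T = (\<Sum>G\<in>cube T. \<bar>q G\<bar>) / 2 ^ card T"

lemma cube_mean_abs_nonneg: "cube_mean_abs q T \<ge> 0"
  unfolding cube_mean_abs_def by (intro divide_nonneg_nonneg sum_nonneg) auto

lemma cube_mean_abs_cong:
  "(\<And>G. G \<in> cube T \<Longrightarrow> q G = q' G) \<Longrightarrow> cube_mean_abs q T = cube_mean_abs q' T"
  unfolding cube_mean_abs_def by (metis (mono_tags, lifting) sum.cong)

lemma finite_subsets_with: "finite A \<Longrightarrow> finite {T. T \<subseteq> A \<and> P T}"
  by (rule rev_finite_subset[OF finite_Collect_subsets]) auto

lemma moment_insert:
  assumes "finite Y" "y0 \<in> Y" "finite T" "a \<notin> T"
  shows "moment Y c mu (insert a T) =
    moment (Y - {y0}) (\<lambda>y. c y * (mu y a - mu y0 a)) mu T + mu y0 a * moment Y c mu T"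
proof -
  have "moment Y c mu (insert a T) =
      (\<Sum>y\<in>Y. c y * (mu y a - mu y0 a) * (\<Prod>i\<in>T. mu y i)) + mu y0 a * moment Y c mu T"
    unfolding moment_def using assms
    by (simp add: sum_distrib_left sum.distrib[symmetric] algebra_simps)
  also have "(\<Sum>y\<in>Y. c y * (mu y a - mu y0 a) * (\<Prod>i\<in>T. mu y i)) =
      (\<Sum>y\<in>Y - {y0}. c y * (mu y a - mu y0 a) * (\<Prod>i\<in>T. mu y i))"
    using assms by (intro sum.mono_neutral_right) auto
  finally show ?thesis unfolding moment_def by simp
qed

lemma sum_insert_subsets_le:
  fixes F :: "'a set \<Rightarrow> real"
  assumes "finite I" "a \<in> I" "\<And>T. F T \<ge> 0"
  shows "(\<Sum>T | T \<subseteq> I - {a} \<and> card T \<le> k. F (insert a T) + F T)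
     \<le> (\<Sum>T | T \<subseteq> I \<and> card T \<le> Suc k. F T)"
proof -
  let ?F' = "{T. T \<subseteq> I - {a} \<and> card T \<le> k}"
  have card_insert: "card (insert a T) \<le> Suc k" if "T \<in> ?F'" for T
    using that assms(1) by (auto intro: card_insert_le_m1 dest: rev_finite_subset)
  have "(\<Sum>T\<in>?F'. F (insert a T) + F T) = (\<Sum>T\<in>insert a ` ?F'. F T) + (\<Sum>T\<in>?F'. F T)"
  proof -
    have "inj_on (insert a) ?F'" unfolding inj_on_def by blast
    then show ?thesis by (simp add: sum.distrib sum.reindex)
  qed
  also have "\<dots> = (\<Sum>T\<in>insert a ` ?F' \<union> ?F'. F T)"
    using assms(1) by (intro sum.union_disjoint[symmetric]) (auto intro: finite_subsets_with)
  also have "\<dots> \<le> (\<Sum>T | T \<subseteq> I \<and> card T \<le> Suc k. F T)"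
    using card_insert assms by (intro sum_mono2 finite_subsets_with) auto
  finally show ?thesis .
qed

lemma insert_increment_bound:
  fixes f :: "'a set \<Rightarrow> real" and B :: real
  assumes "finite T" "T \<subseteq> I"
    and "\<And>a T'. a \<in> I \<Longrightarrow> T' \<subseteq> I - {a} \<Longrightarrow> f (insert a T') \<le> f T' + B"
  shows "f T \<le> f {} + card T * B"
  using assms(1,2)
proof (induction T rule: finite_induct)
  case (insert a T)
  then have "f (insert a T) \<le> f T + B" by (intro assms(3)) auto
  with insert show ?case by (simp add: algebra_simps)
qed simp

lemma abs_moment_le_low_moments:
  fixes mu :: "'y \<Rightarrow> nat \<Rightarrow> real"
  assumes "finite Y" "card Y \<le> k" "finite I" "card I \<le> N"
    and "\<forall>y\<in>Y. \<forall>i\<in>I. \<bar>mu y i\<bar> \<le> 1" and "T \<subseteq> I"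
  shows "\<bar>moment Y c mu T\<bar> \<le>
    (real N + 1) ^ k * (\<Sum>T' | T' \<subseteq> I \<and> card T' \<le> k. \<bar>moment Y c mu T'\<bar>)"
  using assms
proof (induction k arbitrary: Y I c T)
  case 0
  then show ?case by (simp add: moment_def)
next
  case (Suc k)
  show ?case
  proof (cases "Y = {}")
    case True
    then show ?thesis by (simp add: moment_def)
  next
    case False
    then obtain y0 where y0: "y0 \<in> Y" by blast
    define low where "low = (\<Sum>T' | T' \<subseteq> I \<and> card T' \<le> Suc k. \<bar>moment Y c mu T'\<bar>)"
    have low_nonneg: "low \<ge> 0" unfolding low_def by (intro sum_nonneg) auto
    have moment_empty: "\<bar>moment Y c mu {}\<bar> \<le> low"
      unfolding low_def using Suc.prems(3) by (intro member_le_sum finite_subsets_with) auto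
    have increment: "\<bar>moment Y c mu (insert a T')\<bar> \<le> \<bar>moment Y c mu T'\<bar> + (real N + 1) ^ k * low"
      if a: "a \<in> I" and T': "T' \<subseteq> I - {a}" for a T'
    proof -
      \<comment> \<open>Adding the index a to T'' is paid for by dropping the component y0.\<close>
      define c' where "c' y = c y * (mu y a - mu y0 a)" for y
      have mu_y0: "\<bar>mu y0 a\<bar> \<le> 1" using Suc.prems(5) y0 a by blast
      have split: "moment Y c mu (insert a T'') = moment (Y - {y0}) c' mu T'' + mu y0 a * moment Y c mu T''"
        if "T'' \<subseteq> I - {a}" for T''
        unfolding c'_def using that Suc.prems(1,3) y0
        by (intro moment_insert) (auto dest: rev_finite_subset)
      have shrink: "\<bar>mu y0 a * moment Y c mu T''\<bar> \<le> \<bar>moment Y c mu T''\<bar>" for T''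
        using mu_y0 by (simp add: abs_mult mult_left_le_one_le)
      have "\<bar>moment (Y - {y0}) c' mu T'\<bar> \<le>
          (real N + 1) ^ k * (\<Sum>T'' | T'' \<subseteq> I - {a} \<and> card T'' \<le> k. \<bar>moment (Y - {y0}) c' mu T''\<bar>)"
      proof (rule Suc.IH)
        show "finite (Y - {y0})" "finite (I - {a})" "T' \<subseteq> I - {a}"
          using Suc.prems(1,3) T' by auto
        show "card (Y - {y0}) \<le> k" using Suc.prems(2) y0 by simp
        show "card (I - {a}) \<le> N" using Suc.prems(4) card_Diff1_le[of I a] by linarith
        show "\<forall>y\<in>Y - {y0}. \<forall>i\<in>I - {a}. \<bar>mu y i\<bar> \<le> 1" using Suc.prems(5) by blast
      qed
      also have "(\<Sum>T'' | T'' \<subseteq> I - {a} \<and> card T'' \<le> k. \<bar>moment (Y - {y0}) c' mu T''\<bar>)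
          \<le> (\<Sum>T'' | T'' \<subseteq> I - {a} \<and> card T'' \<le> k.
                \<bar>moment Y c mu (insert a T'')\<bar> + \<bar>moment Y c mu T''\<bar>)"
      proof (rule sum_mono)
        fix T'' assume "T'' \<in> {T''. T'' \<subseteq> I - {a} \<and> card T'' \<le> k}"
        then show "\<bar>moment (Y - {y0}) c' mu T''\<bar> \<le> \<bar>moment Y c mu (insert a T'')\<bar> + \<bar>moment Y c mu T''\<bar>"
          using split[of T''] shrink[of T''] by auto
      qed
      also have "\<dots> \<le> low"
        unfolding low_def using Suc.prems(3) a by (intro sum_insert_subsets_le) auto
      finally have "\<bar>moment (Y - {y0}) c' mu T'\<bar> \<le> (real N + 1) ^ k * low"
        by (simp add: mult_left_mono)
      then show ?thesis using split[OF T'] shrink[of T'] by linarith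
    qed
    have "\<bar>moment Y c mu T\<bar> \<le> \<bar>moment Y c mu {}\<bar> + card T * ((real N + 1) ^ k * low)"
      using insert_increment_bound[where f = "\<lambda>T. \<bar>moment Y c mu T\<bar>", OF _ Suc.prems(6) increment]
        Suc.prems(3,6) by (simp add: finite_subset)
    also have "\<dots> \<le> low + real N * ((real N + 1) ^ k * low)"
      using moment_empty card_mono[OF Suc.prems(3,6)] Suc.prems(4) low_nonneg
      by (intro add_mono mult_right_mono) auto
    also have "\<dots> \<le> (real N + 1) ^ Suc k * low"
      using low_nonneg mult_left_mono[OF one_le_power[of "real N + 1" k] low_nonneg]
      by (simp add: algebra_simps)
    finally show ?thesis unfolding low_def .
  qed
qed

lemma moment_eq_fourier:
  assumes "finite T"
  shows "moment Y c mu T = (\<Sum>G\<in>cube T. mixture Y c mu T G * chi T G)"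
proof -
  have prod_split: "(\<Prod>i\<in>T. (1 + G i * mu y i) / 2 * G i) = (\<Prod>i\<in>T. (1 + G i * mu y i) / 2) * chi T G"
    for G y unfolding chi_def by (rule prod.distrib)
  have "(\<Sum>G\<in>cube T. mixture Y c mu T G * chi T G) =
      (\<Sum>y\<in>Y. c y * (\<Sum>G\<in>cube T. \<Prod>i\<in>T. (1 + G i * mu y i) / 2 * G i))"
    unfolding mixture_def prod_split
    by (simp add: sum_distrib_left sum_distrib_right mult.assoc sum.swap[of _ "cube T"])
  also have "\<dots> = (\<Sum>y\<in>Y. c y * (\<Prod>i\<in>T. \<Sum>v\<in>{-1, 1::real}. (1 + v * mu y i) / 2 * v))"
    unfolding cube_PiE using assms
    by (intro sum.cong refl arg_cong2[where f = "(*)"] prod_sum_PiE[symmetric]) auto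
  also have "\<dots> = moment Y c mu T"
    unfolding moment_def by (simp add: field_simps)
  finally show ?thesis by simp
qed

lemma abs_moment_le_mean_abs:
  assumes "finite T"
  shows "\<bar>moment Y c mu T\<bar> \<le> 2 ^ card T * cube_mean_abs (mixture Y c mu T) T"
proof -
  have "\<bar>moment Y c mu T\<bar> \<le> (\<Sum>G\<in>cube T. \<bar>mixture Y c mu T G * chi T G\<bar>)"
    unfolding moment_eq_fourier[OF assms] by (rule sum_abs)
  also have "\<dots> = (\<Sum>G\<in>cube T. \<bar>mixture Y c mu T G\<bar>)"
    by (intro sum.cong) (auto simp: abs_mult abs_chi_cube)
  finally show ?thesis unfolding cube_mean_abs_def by simp
qed

lemma mixture_eq_moment_expansion:
  assumes "finite I"
  shows "mixture Y c mu I G = (\<Sum>X\<in>Pow I. moment Y c mu X * chi X G) / 2 ^ card I"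
proof -
  have "(\<Prod>i\<in>I. (1 + G i * mu y i) / 2) = (\<Sum>X\<in>Pow I. (\<Prod>i\<in>X. mu y i) * chi X G) / 2 ^ card I"
    for y
  proof -
    have "(\<Prod>i\<in>I. (1 + G i * mu y i) / 2) = (\<Prod>i\<in>I. G i * mu y i + 1) / 2 ^ card I"
      by (simp add: prod_dividef add.commute)
    also have "(\<Prod>i\<in>I. G i * mu y i + 1) = (\<Sum>X\<in>Pow I. (\<Prod>i\<in>X. G i * mu y i))"
      using prod_add[OF assms, of "\<lambda>i. G i * mu y i" "\<lambda>_. 1"] by simp
    finally show ?thesis by (simp add: chi_def prod.distrib mult.commute)
  qed
  then show ?thesis unfolding mixture_def moment_def
    by (simp add: sum_divide_distrib sum_distrib_left sum_distrib_right mult.assoc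
        mult.left_commute sum.swap[of _ Y])
qed

lemma mean_abs_mixture_le:
  fixes mu :: "'y \<Rightarrow> nat \<Rightarrow> real"
  assumes "finite Y" "card Y \<le> k" "finite I" "\<forall>y\<in>Y. \<forall>i\<in>I. \<bar>mu y i\<bar> \<le> 1"
  shows "cube_mean_abs (mixture Y c mu I) I \<le> (real (card I) + 1) ^ k * 2 ^ k *
    (\<Sum>T | T \<subseteq> I \<and> card T \<le> k. cube_mean_abs (mixture Y c mu T) T)"
proof -
  define K where "K = (real (card I) + 1) ^ k"
  define low where "low = (\<Sum>T | T \<subseteq> I \<and> card T \<le> k. \<bar>moment Y c mu T\<bar>)"
  have moment_le: "\<bar>moment Y c mu X\<bar> \<le> K * low" if "X \<subseteq> I" for X
    unfolding K_def low_def using assms that by (intro abs_moment_le_low_moments) auto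
  have mixture_le: "\<bar>mixture Y c mu I G\<bar> \<le> K * low" if G: "G \<in> cube I" for G
  proof -
    have "\<bar>\<Sum>X\<in>Pow I. moment Y c mu X * chi X G\<bar> \<le> (\<Sum>X\<in>Pow I. \<bar>moment Y c mu X\<bar>)"
      using G by (intro sum_abs[THEN order_trans] sum_mono) (simp add: abs_mult abs_chi_cube)
    also have "\<dots> \<le> 2 ^ card I * (K * low)"
      using sum_bounded_above[of "Pow I" "\<lambda>X. \<bar>moment Y c mu X\<bar>" "K * low"] moment_le assms(3)
      by (simp add: card_Pow)
    finally show ?thesis
      unfolding mixture_eq_moment_expansion[OF assms(3)] by (simp add: abs_divide field_simps)
  qed
  have "cube_mean_abs (mixture Y c mu I) I \<le> K * low"
    using sum_bounded_above[of "cube I" "\<lambda>G. \<bar>mixture Y c mu I G\<bar>" "K * low"] mixture_le assms(3)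
    by (simp add: cube_mean_abs_def card_cube field_simps)
  also have "low \<le> 2 ^ k * (\<Sum>T | T \<subseteq> I \<and> card T \<le> k. cube_mean_abs (mixture Y c mu T) T)"
    unfolding low_def sum_distrib_left
  proof (rule sum_mono)
    fix T assume T: "T \<in> {T. T \<subseteq> I \<and> card T \<le> k}"
    then have "finite T" using assms(3) finite_subset by blast
    then have "\<bar>moment Y c mu T\<bar> \<le> 2 ^ card T * cube_mean_abs (mixture Y c mu T) T"
      by (rule abs_moment_le_mean_abs)
    also have "\<dots> \<le> 2 ^ k * cube_mean_abs (mixture Y c mu T) T"
      using T by (intro mult_right_mono cube_mean_abs_nonneg) auto
    finally show "\<bar>moment Y c mu T\<bar> \<le> 2 ^ k * cube_mean_abs (mixture Y c mu T) T" .
  qed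
  then have "K * low \<le> K * (2 ^ k * (\<Sum>T | T \<subseteq> I \<and> card T \<le> k. cube_mean_abs (mixture Y c mu T) T))"
    unfolding K_def by (intro mult_left_mono) auto
  finally show ?thesis unfolding K_def by (simp add: mult.assoc)
qed

lemma mixture_diff_scaled:
  "a * mixture Y c mu T G - b * mixture Y c' mu T G = mixture Y (\<lambda>y. a * c y - b * c' y) mu T G"
  unfolding mixture_def by (simp add: sum_distrib_left sum_subtractf left_diff_distrib mult.assoc)

lemma exp_rho: "exp (rho t) = exp t + exp (- t)"
  unfolding rho_def by (simp add: add_pos_pos)

lemma exp_sum_rho:
  assumes "finite L"
  shows "exp (\<Sum>j\<in>L. rho (t j)) = (\<Sum>y\<in>cube L. exp (\<Sum>j\<in>L. y j * t j))"
proof -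
  have "exp (\<Sum>j\<in>L. rho (t j)) = (\<Prod>j\<in>L. \<Sum>v\<in>{-1, 1::real}. exp (v * t j))"
    using assms by (simp add: exp_sum exp_rho add.commute)
  also have "\<dots> = (\<Sum>y\<in>cube L. \<Prod>j\<in>L. exp (y j * t j))"
    unfolding cube_PiE by (rule prod_sum_PiE) (use assms in auto)
  finally show ?thesis using assms by (simp add: exp_sum)
qed

lemma exp_eq_cosh_tanh:
  fixes a :: real
  assumes "v = -1 \<or> v = 1"
  shows "exp (v * a) = 2 * cosh a * ((1 + v * tanh a) / 2)"
proof -
  have "cosh a * tanh a = sinh a"
    using cosh_real_pos[of a] by (simp add: tanh_def)
  then have "2 * cosh a * ((1 + v * tanh a) / 2) = cosh a + v * sinh a"
    by (simp add: algebra_simps)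
  then show ?thesis
    using assms cosh_plus_sinh[of a] cosh_minus_sinh[of a] by auto
qed

lemma cube_agree_eq_PiE:
  assumes "T \<subseteq> I" "G \<in> cube T"
  shows "{z \<in> cube I. agree T G z} = PiE I (\<lambda>i. if i \<in> T then {G i} else {-1, 1})"
  using assms by (auto simp: cube_iff agree_def PiE_iff extensional_def split: if_splits) (metis subsetD)

definition merge :: "nat set \<Rightarrow> (nat \<Rightarrow> real) \<Rightarrow> (nat \<Rightarrow> real) \<Rightarrow> nat \<Rightarrow> real"
  where "merge I w z = (\<lambda>i. if i \<in> I then z i else w i)"

lemma bij_betw_merge:
  assumes "I \<subseteq> A"
  shows "bij_betw (\<lambda>(w, z). merge I w z) (cube (A - I) \<times> cube I) (cube A)"
proof (rule bij_betw_byWitness[where f' = "\<lambda>x. (restrict x (A - I), restrict x I)"])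
  show "\<forall>p\<in>cube (A - I) \<times> cube I. (\<lambda>x. (restrict x (A - I), restrict x I)) ((\<lambda>(w, z). merge I w z) p) = p"
    by (fastforce simp: cube_iff merge_def restrict_def)
  show "\<forall>x\<in>cube A. (\<lambda>(w, z). merge I w z) (restrict x (A - I), restrict x I) = x"
    using assms by (fastforce simp: cube_iff merge_def restrict_def)
  show "(\<lambda>(w, z). merge I w z) ` (cube (A - I) \<times> cube I) \<subseteq> cube A"
    using assms by (auto simp: cube_iff merge_def)
  show "(\<lambda>x. (restrict x (A - I), restrict x I)) ` cube A \<subseteq> cube (A - I) \<times> cube I"
    using assms by (auto simp: cube_iff restrict_def) (metis subsetD)
qed

lemma sum_cube_split:
  assumes "I \<subseteq> A"
  shows "(\<Sum>x\<in>cube A. F x) = (\<Sum>w\<in>cube (A - I). \<Sum>z\<in>cube I. F (merge I w z))"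
  using sum.reindex_bij_betw[OF bij_betw_merge[OF assms], of F]
  by (simp add: sum.cartesian_product case_prod_unfold)

lemma sum_agree_exp_eq:
  fixes a :: "nat \<Rightarrow> real"
  assumes "finite I" "T \<subseteq> I" "G \<in> cube T"
  shows "(\<Sum>z | z \<in> cube I \<and> agree T G z. exp (\<Sum>i\<in>I. z i * a i)) =
    (\<Prod>i\<in>I. 2 * cosh (a i)) * (\<Prod>i\<in>T. (1 + G i * tanh (a i)) / 2)"
proof -
  define B where "B = (\<lambda>i. if i \<in> T then {G i} else {-1, 1::real})"
  have "(\<Sum>z | z \<in> cube I \<and> agree T G z. exp (\<Sum>i\<in>I. z i * a i)) =
      (\<Sum>z\<in>PiE I B. \<Prod>i\<in>I. exp (z i * a i))"
    using cube_agree_eq_PiE[OF assms(2,3)] assms(1) by (simp add: B_def exp_sum)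
  also have "\<dots> = (\<Prod>i\<in>I. \<Sum>v\<in>B i. exp (v * a i))"
    by (rule prod_sum_PiE[symmetric]) (use assms(1) in \<open>auto simp: B_def\<close>)
  also have "\<dots> = (\<Prod>i\<in>I. 2 * cosh (a i) * (if i \<in> T then (1 + G i * tanh (a i)) / 2 else 1))"
  proof (intro prod.cong refl)
    fix i assume "i \<in> I"
    show "(\<Sum>v\<in>B i. exp (v * a i)) = 2 * cosh (a i) * (if i \<in> T then (1 + G i * tanh (a i)) / 2 else 1)"
    proof (cases "i \<in> T")
      case True
      then show ?thesis using cube_values[OF assms(3) True] by (simp add: B_def exp_eq_cosh_tanh)
    next
      case False
      then show ?thesis by (simp add: B_def cosh_def)
    qed
  qed
  also have "\<dots> = (\<Prod>i\<in>I. 2 * cosh (a i)) * (\<Prod>i\<in>T. (1 + G i * tanh (a i)) / 2)"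
    using assms(1,2) by (simp add: prod.distrib prod.If_cases Int_absorb1)
  finally show ?thesis .
qed

definition rbm_cond_cov :: "nat \<Rightarrow> nat \<Rightarrow> (nat \<Rightarrow> nat \<Rightarrow> real) \<Rightarrow> (nat \<Rightarrow> real)
    \<Rightarrow> (nat \<Rightarrow> real) \<Rightarrow> nat \<Rightarrow> nat set \<Rightarrow> real \<Rightarrow> (nat \<Rightarrow> real) \<Rightarrow> nat set
    \<Rightarrow> (nat \<Rightarrow> real) \<Rightarrow> real" where
  "rbm_cond_cov n m J h g u S r xs T G = rbm_cond n m J h g (\<lambda>x. x u = r \<and> agree T G x) S xs
     - rbm_cond n m J h g (\<lambda>x. x u = r) S xs * rbm_cond n m J h g (agree T G) S xs"

lemma rbm_prob_nonneg: "rbm_prob n m J h g E \<ge> 0"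
  unfolding rbm_prob_def by (intro divide_nonneg_nonneg sum_nonneg) auto

lemma rbm_nu_eq_mean_abs:
  "rbm_nu n m J h g u T S = (\<Sum>r\<in>{-1, 1::real}. \<Sum>xs\<in>cube S.
     rbm_prob n m J h g (agree S xs) / 2 * cube_mean_abs (rbm_cond_cov n m J h g u S r xs T) T)"
  unfolding rbm_nu_def cube_mean_abs_def rbm_cond_cov_def
  by (rule sum.cong[OF refl], subst sum.swap) (simp add: sum_distrib_left sum_divide_distrib mult.assoc)

lemma rbm_nu_nonneg: "rbm_nu n m J h g u T S \<ge> 0"
  unfolding rbm_nu_eq_mean_abs
  by (intro sum_nonneg mult_nonneg_nonneg divide_nonneg_nonneg rbm_prob_nonneg cube_mean_abs_nonneg) auto

context
  fixes n m :: nat and J :: "nat \<Rightarrow> nat \<Rightarrow> real" and h g :: "nat \<Rightarrow> real" and I L :: "nat set"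
  assumes I_sub: "I \<subseteq> {..<n}" and L_sub: "L \<subseteq> {..<m}"
    and L_covers: "\<And>i j. i \<in> I \<Longrightarrow> j < m \<Longrightarrow> j \<notin> L \<Longrightarrow> J i j = 0"
begin

definition field_out :: "nat \<Rightarrow> (nat \<Rightarrow> real) \<Rightarrow> real" where
  "field_out j x = (\<Sum>i\<in>{..<n} - I. J i j * x i) + g j"

definition field_in :: "nat \<Rightarrow> (nat \<Rightarrow> real) \<Rightarrow> real" where
  "field_in i y = h i + (\<Sum>j\<in>L. J i j * y j)"

definition weight_out :: "(nat \<Rightarrow> real) \<Rightarrow> (nat \<Rightarrow> real) \<Rightarrow> real" where
  "weight_out x y = exp ((\<Sum>j\<in>{..<m} - L. rho (field_out j x)) + (\<Sum>i\<in>{..<n} - I. h i * x i)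
     + (\<Sum>j\<in>L. y j * field_out j x))"

definition event_weight :: "((nat \<Rightarrow> real) \<Rightarrow> bool) \<Rightarrow> (nat \<Rightarrow> real) \<Rightarrow> real" where
  "event_weight E y = (\<Sum>w | w \<in> cube ({..<n} - I) \<and> E w. weight_out w y)"

lemma finite_I: "finite I"
  using I_sub finite_subset by blast

lemma finite_L: "finite L"
  using L_sub finite_subset by blast

lemma exp_rbm_f_eq_latent_sum:
  "exp (rbm_f n m J h g x) = (\<Sum>y\<in>cube L. weight_out x y * exp (\<Sum>i\<in>I. x i * field_in i y))"
proof -
  define t where "t j = (\<Sum>i<n. J i j * x i) + g j" for j
  have split_n: "(\<Sum>i<n. f i) = (\<Sum>i\<in>I. f i) + (\<Sum>i\<in>{..<n} - I. f i)" for f :: "nat \<Rightarrow> real"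
    using I_sub by (simp add: sum.subset_diff add.commute)
  have split_m: "(\<Sum>j<m. f j) = (\<Sum>j\<in>L. f j) + (\<Sum>j\<in>{..<m} - L. f j)" for f :: "nat \<Rightarrow> real"
    using L_sub by (simp add: sum.subset_diff add.commute)
  have t_split: "t j = (\<Sum>i\<in>I. J i j * x i) + field_out j x" for j
    unfolding t_def field_out_def split_n[of "\<lambda>i. J i j * x i"] by simp
  have t_out: "t j = field_out j x" if "j \<in> {..<m} - L" for j
    using that L_covers unfolding t_split by simp
  have rest: "(\<Sum>j\<in>L. y j * t j) + (\<Sum>i\<in>I. h i * x i) =
      (\<Sum>j\<in>L. y j * field_out j x) + (\<Sum>i\<in>I. x i * field_in i y)" for y
    unfolding t_split field_in_def
    by (simp add: algebra_simps sum.distrib sum_distrib_left sum.swap[of _ L])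
  have "rbm_f n m J h g x = (\<Sum>j\<in>L. rho (t j)) + (\<Sum>j\<in>{..<m} - L. rho (field_out j x))
      + (\<Sum>i\<in>{..<n} - I. h i * x i) + (\<Sum>i\<in>I. h i * x i)"
    unfolding rbm_f_def split_m[of "\<lambda>j. rho (t j)"] split_n[of "\<lambda>i. h i * x i"] t_def[symmetric]
    using t_out by simp
  then have "exp (rbm_f n m J h g x) = (\<Sum>y\<in>cube L. exp ((\<Sum>j\<in>L. y j * t j) + (\<Sum>i\<in>I. h i * x i)
      + (\<Sum>j\<in>{..<m} - L. rho (field_out j x)) + (\<Sum>i\<in>{..<n} - I. h i * x i)))"
    using exp_sum_rho[OF finite_L, of t] by (simp add: exp_add sum_distrib_left sum_distrib_right mult_ac)
  also have "\<dots> = (\<Sum>y\<in>cube L. weight_out x y * exp (\<Sum>i\<in>I. x i * field_in i y))"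
    unfolding rest weight_out_def by (simp add: exp_add[symmetric] add_ac)
  finally show ?thesis .
qed

lemma sum_exp_rbm_f_event:
  assumes E: "\<And>x x'. \<forall>i\<in>{..<n} - I. x i = x' i \<Longrightarrow> E x = E x'" and T: "T \<subseteq> I" "G \<in> cube T"
  shows "(\<Sum>x | x \<in> cube {..<n} \<and> E x \<and> agree T G x. exp (rbm_f n m J h g x)) =
    (\<Sum>y\<in>cube L. event_weight E y * (\<Prod>i\<in>I. 2 * cosh (field_in i y)) *
      (\<Prod>i\<in>T. (1 + G i * tanh (field_in i y)) / 2))"
proof -
  let ?A = "\<lambda>w y. if E w then weight_out w y else 0"
  let ?B = "\<lambda>z y. if agree T G z then exp (\<Sum>i\<in>I. z i * field_in i y) else 0"
  have merge_E: "E (merge I w z) = E w" for w z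
    by (rule E) (simp add: merge_def)
  have merge_agree: "agree T G (merge I w z) = agree T G z" for w z
    using T(1) by (auto simp: merge_def agree_def)
  have merge_weight: "weight_out (merge I w z) y = weight_out w y" for w z y
    unfolding weight_out_def field_out_def merge_def by (auto intro!: sum.cong arg_cong[where f = exp])
  have merge_field: "(\<Sum>i\<in>I. merge I w z i * field_in i y) = (\<Sum>i\<in>I. z i * field_in i y)" for w z y
    by (simp add: merge_def)
  have "(\<Sum>x | x \<in> cube {..<n} \<and> E x \<and> agree T G x. exp (rbm_f n m J h g x)) =
      (\<Sum>x\<in>cube {..<n}. if E x \<and> agree T G x then exp (rbm_f n m J h g x) else 0)"
    by (simp add: sum.inter_filter finite_cube)
  also have "\<dots> = (\<Sum>w\<in>cube ({..<n} - I). \<Sum>z\<in>cube I. \<Sum>y\<in>cube L. ?A w y * ?B z y)"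
    unfolding sum_cube_split[OF I_sub] exp_rbm_f_eq_latent_sum merge_E merge_agree merge_weight merge_field
    by (intro sum.cong refl) (auto simp: sum_distrib_left sum_distrib_right)
  also have "\<dots> = (\<Sum>y\<in>cube L. \<Sum>w\<in>cube ({..<n} - I). \<Sum>z\<in>cube I. ?A w y * ?B z y)"
    by (subst sum.swap) (simp add: sum.swap[of _ "cube I"])
  also have "\<dots> = (\<Sum>y\<in>cube L. (\<Sum>w\<in>cube ({..<n} - I). ?A w y) * (\<Sum>z\<in>cube I. ?B z y))"
    by (simp add: sum_product)
  also have "\<dots> = (\<Sum>y\<in>cube L. event_weight E y * (\<Prod>i\<in>I. 2 * cosh (field_in i y)) *
      (\<Prod>i\<in>T. (1 + G i * tanh (field_in i y)) / 2))"
    using sum_agree_exp_eq[OF finite_I T]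
    by (simp add: event_weight_def sum.inter_filter finite_cube finite_I mult.assoc)
  finally show ?thesis .
qed

lemma rbm_prob_event_eq_mixture:
  assumes "\<And>x x'. \<forall>i\<in>{..<n} - I. x i = x' i \<Longrightarrow> E x = E x'" "T \<subseteq> I" "G \<in> cube T"
  shows "rbm_prob n m J h g (\<lambda>x. E x \<and> agree T G x) = mixture (cube L)
    (\<lambda>y. event_weight E y * (\<Prod>i\<in>I. 2 * cosh (field_in i y)) / (\<Sum>x\<in>cube {0..<n}. exp (rbm_f n m J h g x)))
    (\<lambda>y i. tanh (field_in i y)) T G"
proof -
  have "rbm_prob n m J h g (\<lambda>x. E x \<and> agree T G x) =
      (\<Sum>x | x \<in> cube {..<n} \<and> E x \<and> agree T G x. exp (rbm_f n m J h g x)) /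
      (\<Sum>x\<in>cube {..<n}. exp (rbm_f n m J h g x))"
    unfolding rbm_prob_def atLeast0LessThan ..
  also have "\<dots> = (\<Sum>y\<in>cube L. event_weight E y * (\<Prod>i\<in>I. 2 * cosh (field_in i y)) *
      (\<Prod>i\<in>T. (1 + G i * tanh (field_in i y)) / 2)) / (\<Sum>x\<in>cube {..<n}. exp (rbm_f n m J h g x))"
    by (simp only: sum_exp_rbm_f_event[OF assms])
  finally show ?thesis
    by (simp add: mixture_def atLeast0LessThan sum_divide_distrib mult.assoc mult.commute)
qed

lemma rbm_cond_cov_eq_mixture:
  assumes "u \<notin> I" "u < n" "S \<subseteq> {..<n}" "S \<inter> I = {}"
  shows "\<exists>c. \<forall>T \<subseteq> I. \<forall>G\<in>cube T.
    rbm_cond_cov n m J h g u S r xs T G = mixture (cube L) c (\<lambda>y i. tanh (field_in i y)) T G"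
proof -
  define E1 where "E1 x \<longleftrightarrow> x u = r \<and> agree S xs x" for x :: "nat \<Rightarrow> real"
  define E2 where "E2 = agree S xs"
  have outside: "u \<in> {..<n} - I" "S \<subseteq> {..<n} - I"
    using assms by auto
  have E1: "E1 x = E1 x'" and E2: "E2 x = E2 x'" if "\<forall>i\<in>{..<n} - I. x i = x' i" for x x'
  proof -
    have "x i = x' i" if "i \<in> insert u S" for i
      using that outside \<open>\<forall>i\<in>{..<n} - I. x i = x' i\<close> by blast
    then show "E1 x = E1 x'" "E2 x = E2 x'"
      unfolding E1_def E2_def agree_def by auto
  qed
  define Z where "Z = (\<Sum>x\<in>cube {0..<n}. exp (rbm_f n m J h g x))"
  define w where "w E = (\<lambda>y. event_weight E y * (\<Prod>i\<in>I. 2 * cosh (field_in i y)) / Z)" for E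
  define P_S where "P_S = rbm_prob n m J h g (agree S xs)"
  define P_u where "P_u = rbm_cond n m J h g (\<lambda>x. x u = r) S xs"
  show ?thesis
  proof (intro exI[of _ "\<lambda>y. 1 / P_S * w E1 y - P_u / P_S * w E2 y"] allI impI ballI)
    fix T G assume T: "T \<subseteq> I" and G: "G \<in> cube T"
    have "(\<lambda>x. (x u = r \<and> agree T G x) \<and> agree S xs x) = (\<lambda>x. E1 x \<and> agree T G x)"
      "(\<lambda>x. agree T G x \<and> agree S xs x) = (\<lambda>x. E2 x \<and> agree T G x)"
      by (auto simp: E1_def E2_def)
    then have "rbm_cond_cov n m J h g u S r xs T G = 1 / P_S * rbm_prob n m J h g (\<lambda>x. E1 x \<and> agree T G x)
        - P_u / P_S * rbm_prob n m J h g (\<lambda>x. E2 x \<and> agree T G x)"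
      unfolding rbm_cond_cov_def P_u_def[symmetric] unfolding rbm_cond_def P_S_def[symmetric] by simp
    also have "\<dots> = 1 / P_S * mixture (cube L) (w E1) (\<lambda>y i. tanh (field_in i y)) T G
        - P_u / P_S * mixture (cube L) (w E2) (\<lambda>y i. tanh (field_in i y)) T G"
      by (simp only: rbm_prob_event_eq_mixture[OF E1 T G] rbm_prob_event_eq_mixture[OF E2 T G] w_def Z_def)
    finally show "rbm_cond_cov n m J h g u S r xs T G =
        mixture (cube L) (\<lambda>y. 1 / P_S * w E1 y - P_u / P_S * w E2 y) (\<lambda>y i. tanh (field_in i y)) T G"
      unfolding mixture_diff_scaled .
  qed
qed

lemma rbm_nu_le_small_subsets:
  assumes "u \<notin> I" "u < n" "S \<subseteq> {..<n}" "S \<inter> I = {}" "2 ^ card L \<le> k"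
  shows "rbm_nu n m J h g u I S \<le>
    (real (card I) + 1) ^ k * 2 ^ k * (\<Sum>T | T \<subseteq> I \<and> card T \<le> k. rbm_nu n m J h g u T S)"
proof -
  define K where "K = (real (card I) + 1) ^ k * 2 ^ k"
  define F where "F = {T. T \<subseteq> I \<and> card T \<le> k}"
  define q where "q r xs T = cube_mean_abs (rbm_cond_cov n m J h g u S r xs T) T" for r xs T
  define w where "w xs = rbm_prob n m J h g (agree S xs) / 2" for xs
  have q_le: "q r xs I \<le> K * (\<Sum>T\<in>F. q r xs T)" for r xs
  proof -
    obtain c where c: "\<forall>T \<subseteq> I. \<forall>G\<in>cube T.
        rbm_cond_cov n m J h g u S r xs T G = mixture (cube L) c (\<lambda>y i. tanh (field_in i y)) T G"
      using rbm_cond_cov_eq_mixture[OF assms(1-4)] by blast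
    have q_eq: "q r xs T = cube_mean_abs (mixture (cube L) c (\<lambda>y i. tanh (field_in i y)) T) T"
      if "T \<subseteq> I" for T
      unfolding q_def using c that by (intro cube_mean_abs_cong) auto
    have "\<bar>tanh (field_in i y)\<bar> \<le> 1" for i y
      using tanh_real_bounds[of "field_in i y"] by auto
    then have "cube_mean_abs (mixture (cube L) c (\<lambda>y i. tanh (field_in i y)) I) I \<le>
        K * (\<Sum>T\<in>F. cube_mean_abs (mixture (cube L) c (\<lambda>y i. tanh (field_in i y)) T) T)"
      unfolding K_def F_def using assms(5) finite_L finite_I
      by (intro mean_abs_mixture_le) (auto simp: finite_cube card_cube)
    also have "(\<Sum>T\<in>F. cube_mean_abs (mixture (cube L) c (\<lambda>y i. tanh (field_in i y)) T) T) = (\<Sum>T\<in>F. q r xs T)"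
      unfolding F_def by (intro sum.cong) (auto simp: q_eq)
    finally show ?thesis using q_eq by simp
  qed
  have "rbm_nu n m J h g u I S = (\<Sum>r\<in>{-1, 1::real}. \<Sum>xs\<in>cube S. w xs * q r xs I)"
    unfolding rbm_nu_eq_mean_abs q_def w_def ..
  also have "\<dots> \<le> (\<Sum>r\<in>{-1, 1::real}. \<Sum>xs\<in>cube S. w xs * (K * (\<Sum>T\<in>F. q r xs T)))"
    unfolding w_def by (intro sum_mono mult_left_mono q_le) (simp add: rbm_prob_nonneg)
  also have "\<dots> = K * (\<Sum>T\<in>F. \<Sum>r\<in>{-1, 1::real}. \<Sum>xs\<in>cube S. w xs * q r xs T)"
    by (simp add: sum_distrib_left sum.swap[of _ F] mult.left_commute distrib_left)
  also have "\<dots> = K * (\<Sum>T\<in>F. rbm_nu n m J h g u T S)"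
    unfolding rbm_nu_eq_mean_abs q_def w_def ..
  finally show ?thesis unfolding K_def F_def .
qed

end

lemma card_small_subsets_le:
  assumes "finite I" "k + 1 \<le> card I"
  shows "card {T. T \<subseteq> I \<and> card T \<le> k} \<le> card I ^ (k + 1)"
proof -
  have "{T. T \<subseteq> I \<and> card T \<le> k} = (\<Union>j\<in>{..k}. {T. T \<subseteq> I \<and> card T = j})"
    by auto
  then have "card {T. T \<subseteq> I \<and> card T \<le> k} \<le> (\<Sum>j\<le>k. card I choose j)"
    using card_UN_le[of "{..k}" "\<lambda>j. {T. T \<subseteq> I \<and> card T = j}"] n_subsets[OF assms(1)] by simp
  also have "\<dots> \<le> (\<Sum>j\<le>k. card I ^ k)"
  proof (rule sum_mono)
    fix j assume "j \<in> {..k}"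
    then have "card I choose j \<le> card I ^ j" "card I ^ j \<le> card I ^ k"
      using assms(2) by (auto intro: binomial_le_pow power_increasing)
    then show "card I choose j \<le> card I ^ k" by linarith
  qed
  also have "\<dots> \<le> card I * card I ^ k"
    using mult_le_mono1[OF assms(2), of "card I ^ k"] by simp
  finally show ?thesis by simp
qed

lemma exists_ge_average:
  fixes f :: "'a \<Rightarrow> real"
  assumes "finite F" "F \<noteq> {}"
  shows "\<exists>T\<in>F. sum f F \<le> card F * f T"
proof -
  have "Max (f ` F) \<in> f ` F"
    using assms by (intro Max_in) auto
  then obtain T where T: "T \<in> F" "f T = Max (f ` F)"
    by (metis imageE)
  then have "f T' \<le> f T" if "T' \<in> F" for T'
    using that assms by simp
  then show ?thesis
    using T(1) sum_bounded_above[of F f "f T"] by auto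
qed

lemma exists_subset_dominating_sum:
  fixes nu :: "nat set \<Rightarrow> real"
  assumes "finite I" "k < card I" "\<And>T. nu T \<ge> 0"
  shows "\<exists>T \<subseteq> I. card T \<le> k \<and>
    (\<Sum>T | T \<subseteq> I \<and> card T \<le> k. nu T) \<le> real (card I) ^ (k + 1) * nu T"
proof -
  define F where "F = {T. T \<subseteq> I \<and> card T \<le> k}"
  have "finite F" "{} \<in> F"
    unfolding F_def using assms(1) by (auto intro: finite_subsets_with)
  then obtain T where T: "T \<in> F" "sum nu F \<le> card F * nu T"
    using exists_ge_average[of F nu] by blast
  have "card F \<le> card I ^ (k + 1)"
    unfolding F_def using assms(1,2) by (intro card_small_subsets_le) auto
  then have "real (card F) \<le> real (card I) ^ (k + 1)"
    by (metis of_nat_le_iff of_nat_power)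
  then have "sum nu F \<le> real (card I) ^ (k + 1) * nu T"
    using T(2) assms(3)[of T] by (meson mult_right_mono order_trans)
  then show ?thesis
    using T(1) unfolding F_def by blast
qed

lemma low_order_factor_le:
  fixes N :: real
  assumes "N \<ge> 1" "k \<ge> 1"
  shows "(N + 1) ^ k * 2 ^ k * N ^ (k + 1) \<le> (4 * N) ^ k * N ^ (k * (k + 1))"
proof -
  have "(N + 1) ^ k * 2 ^ k = (2 * N + 2) ^ k"
    by (simp add: power_mult_distrib[symmetric] algebra_simps)
  also have "\<dots> \<le> (4 * N) ^ k"
    using assms(1) by (intro power_mono) auto
  finally show ?thesis
    using assms by (intro mult_mono power_increasing) auto
qed

lemma exists_small_subset_ge:
  fixes nu :: "nat set \<Rightarrow> real"
  assumes "finite I" "I \<noteq> {}" "k \<ge> 1" "\<And>T. nu T \<ge> 0"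
    and low_order: "nu I \<le> (real (card I) + 1) ^ k * 2 ^ k * (\<Sum>T | T \<subseteq> I \<and> card T \<le> k. nu T)"
  shows "\<exists>I' \<subseteq> I. card I' \<le> k \<and>
    nu I' \<ge> (1 / (4 * real (card I)) ^ k) * (1 / real (card I)) ^ (k * (k + 1)) * nu I"
proof -
  define N where "N = real (card I)"
  define C where "C = (4 * N) ^ k * N ^ (k * (k + 1))"
  have N: "N \<ge> 1"
    using assms(1,2) by (simp add: N_def Suc_le_eq card_gt_0_iff)
  have "1 * 1 \<le> (4 * N) ^ k * N ^ (k * (k + 1))"
    using N by (intro mult_mono one_le_power) auto
  then have C: "C \<ge> 1"
    unfolding C_def by simp
  have "\<exists>I' \<subseteq> I. card I' \<le> k \<and> nu I \<le> C * nu I'"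
  proof (cases "card I \<le> k")
    case True
    have "1 * nu I \<le> C * nu I"
      using C assms(4)[of I] by (rule mult_right_mono)
    then show ?thesis
      using True by auto
  next
    case False
    then have "k < card I" by simp
    then obtain T where T: "T \<subseteq> I" "card T \<le> k"
      and dominating: "(\<Sum>T | T \<subseteq> I \<and> card T \<le> k. nu T) \<le> N ^ (k + 1) * nu T"
      using exists_subset_dominating_sum[where nu = nu] assms(1,4) unfolding N_def by blast
    have "nu I \<le> (N + 1) ^ k * 2 ^ k * (N ^ (k + 1) * nu T)"
      by (rule order_trans[OF low_order[folded N_def] mult_left_mono[OF dominating]]) (use N in simp)
    also have "\<dots> \<le> C * nu T"
      using mult_right_mono[OF low_order_factor_le[OF N assms(3)] assms(4)[of T]] unfolding C_def
      by (simp only: mult.assoc)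
    finally show ?thesis
      using T by blast
  qed
  moreover have coeff: "(1 / (4 * N) ^ k) * (1 / N) ^ (k * (k + 1)) = 1 / C"
    unfolding C_def by (simp add: power_one_over)
  ultimately show ?thesis
    using C unfolding N_def[symmetric] coeff by (auto simp: pos_divide_le_eq mult.commute)
qed

lemma card_latent_nbhd_le_rbm_s:
  assumes "u < n" "I \<subseteq> mrf_nbhd n m J h g u"
  shows "card {j \<in> {..<m}. \<exists>i\<in>I. J i j \<noteq> 0} \<le> rbm_s n m J h g"
proof -
  have "card {j \<in> {..<m}. \<exists>i\<in>I. J i j \<noteq> 0} \<le>
      card {j \<in> {0..<m}. \<exists>i\<in>mrf_nbhd n m J h g u. J i j \<noteq> 0}"
    using assms(2) by (intro card_mono) auto
  also have "\<dots> \<le> rbm_s n m J h g"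
    unfolding rbm_s_def using assms(1) by (intro Max_ge) auto
  finally show ?thesis .
qed

theorem lemma4:
  fixes n m :: nat and J :: "nat \<Rightarrow> nat \<Rightarrow> real" and h g :: "nat \<Rightarrow> real"
    and u :: nat and I S :: "nat set"
  assumes "u < n" and "I \<subseteq> {0..<n}" and "S \<subseteq> {0..<n}"
    and "u \<notin> I" and "u \<notin> S" and "I \<inter> S = {}"
    and "I \<noteq> {}"
    and "I \<subseteq> mrf_nbhd n m J h g u"
  shows "\<exists>I' \<subseteq> I. card I' \<le> 2 ^ rbm_s n m J h g \<and>
    rbm_nu n m J h g u I' S \<ge>
      (1 / (4 * real (card I)) ^ (2 ^ rbm_s n m J h g)) *
      (1 / real (card I)) ^ (2 ^ rbm_s n m J h g * (2 ^ rbm_s n m J h g + 1)) *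
      rbm_nu n m J h g u I S"
proof (rule exists_small_subset_ge)
  let ?k = "2 ^ rbm_s n m J h g :: nat"
  define L where "L = {j \<in> {..<m}. \<exists>i\<in>I. J i j \<noteq> 0}"
  have "2 ^ card L \<le> ?k"
    unfolding L_def using card_latent_nbhd_le_rbm_s[OF assms(1,8)] by (intro power_increasing) auto
  then show "rbm_nu n m J h g u I S \<le>
      (real (card I) + 1) ^ ?k * 2 ^ ?k * (\<Sum>T | T \<subseteq> I \<and> card T \<le> ?k. rbm_nu n m J h g u T S)"
    using assms(1-4,6) by (intro rbm_nu_le_small_subsets[where L = L]) (auto simp: L_def)
  show "finite I" using assms(2) finite_subset by blast
qed (use assms(7) rbm_nu_nonneg in auto)

end
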